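(* Let $\alpha\in]0,1[$. Let $f$ be differentiable on $[0,1]$ with $f(0)=f(1)=0$ and $f'$ contracting on $[0,1]$. Then for $x\in]0,1[$, $f$ is $(\alpha+1)$-derivable at $x$ if and only if $f'$ is $\alpha$-derivable at $x$, and in that case $$(D_{\alpha+1}f)(x)=2\,(D_\alpha f')(x).$$
   Context: Fourier coefficients: $\widehat h(s)=\frac1{2\pi}\int_{-\pi}^{\pi}h(\theta)e^{-is\theta}d\theta$; $T_N(h)$ is the $(N+1)\times(N+1)$ matrix with $(T_N(h))_{k+1,l+1}=\widehat h(k-l)$. For $\beta>0$, $\varphi_{\beta,R}(\theta)=(1-Re^{i\theta})^{\beta}(1+Re^{-i\theta})^{\beta}$ (principal branch), $\varphi_\beta=\lim_{R\to1^-}\varphi_{\beta,R}$. For $g$ on $[0,1]$, $X_N=(g(l/N))_{0\le l\le N}$; $g$ is $\beta$-derivable at $x$ if $\lim_{N\to\infty}N^{\beta}\sum_{l=0}^N(T_N(\varphi_\beta))_{k+1,l+1}(X_N)_l$ with $k=[Nx]$ exists and is finite; the limit is $(D_\beta g)(x)$. "Contracting" means Lipschitz. *)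

theory Defs
  imports "HOL-Analysis.Analysis"
begin

definition fourier_coeff :: "(real \<Rightarrow> complex) \<Rightarrow> int \<Rightarrow> complex" where
  "fourier_coeff h s =
     complex_of_real (1 / (2 * pi)) *
       integral {-pi..pi} (\<lambda>t. h t * exp (- \<i> * of_int s * complex_of_real t))"

text \<open>Toeplitz matrix entry (T_N(h))_{k+1,l+1} = hat h (k - l), for 0 <= k,l <= N.\<close>
definition toeplitz_entry :: "(real \<Rightarrow> complex) \<Rightarrow> nat \<Rightarrow> nat \<Rightarrow> complex" where
  "toeplitz_entry h k l = fourier_coeff h (int k - int l)"

definition phiR :: "real \<Rightarrow> real \<Rightarrow> real \<Rightarrow> complex" where
  "phiR \<beta> R t =
     (1 - complex_of_real R * exp (\<i> * complex_of_real t)) powr complex_of_real \<beta> *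
     (1 + complex_of_real R * exp (- \<i> * complex_of_real t)) powr complex_of_real \<beta>"

definition phi :: "real \<Rightarrow> real \<Rightarrow> complex" where
  "phi \<beta> t = Lim (at_left 1) (\<lambda>R. phiR \<beta> R t)"

definition frac_seq :: "real \<Rightarrow> (real \<Rightarrow> real) \<Rightarrow> real \<Rightarrow> nat \<Rightarrow> complex" where
  "frac_seq \<beta> g x N =
     complex_of_real (real N powr \<beta>) *
     (\<Sum>l = 0..N. toeplitz_entry (phi \<beta>) (nat \<lfloor>real N * x\<rfloor>) l *
                   complex_of_real (g (real l / real N)))"

definition frac_derivable :: "real \<Rightarrow> (real \<Rightarrow> real) \<Rightarrow> real \<Rightarrow> bool" where
  "frac_derivable \<beta> g x \<longleftrightarrow> convergent (frac_seq \<beta> g x)"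

definition frac_deriv :: "real \<Rightarrow> (real \<Rightarrow> real) \<Rightarrow> real \<Rightarrow> complex" where
  "frac_deriv \<beta> g x = lim (frac_seq \<beta> g x)"

end

theory Submission
  imports Defs
begin

(* The symbol of order a + 1 factors as phi_(a+1)(t) = phi_a(t) (e^(-it) - e^(it)), so its Fourier
   coefficients satisfy c_(a+1)(s) = c_a(s + 1) - c_a(s - 1).  Summation by parts, whose boundary
   terms vanish because f(0) = f(1) = 0, turns the Toeplitz sum of order a + 1 for f into the
   Toeplitz sum of order a for the centred differences N (f((m+1)/N) - f((m-1)/N)).  These equal
   2 f'(m/N) up to O(1/N) at interior nodes (Taylor with Lipschitz f') and up to O(1) at the two
   endpoints.  Writing phi_a as a product of two binomial series, whose coefficients satisfy
   |binom(a,n)| <= 2/(n+1) and have absolute sum at most 2, gives |c_a(s)| <= 8/(|s|+1).  The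
   weights 8/(|k-m|+1) sum to O(log N) and are O(1/N) at the endpoints when k/N -> x in (0,1), so
   the two normalised sequences differ by O(N^(a-1) log N), which tends to 0. *)

lemma gbinomial_pred_alternating_bounds:
  fixes a :: real assumes "0 \<le> a" "a \<le> 1"
  shows "0 \<le> (-1) ^ k * ((a - 1) gchoose k)" "(-1) ^ k * ((a - 1) gchoose k) \<le> 1"
proof -
  have "(-1) ^ k * ((a - 1) gchoose k) = (of_nat k - a) gchoose k"
    by (subst gbinomial_negated_upper) (simp flip: power_mult_distrib)
  also have "\<dots> = (\<Prod>i<k. (of_nat k - a - of_nat i) / of_nat (k - i))"
    by (simp add: gbinomial_altdef_of_nat atLeast0LessThan)
  finally have eq: "(-1) ^ k * ((a - 1) gchoose k) = (\<Prod>i<k. (of_nat k - a - of_nat i) / of_nat (k - i))" .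
  have "0 \<le> (of_nat k - a - of_nat i) / of_nat (k - i)" "(of_nat k - a - of_nat i) / of_nat (k - i) \<le> 1"
    if "i < k" for i
    using that assms by (auto simp: of_nat_diff field_simps)
  then show "0 \<le> (-1) ^ k * ((a - 1) gchoose k)" "(-1) ^ k * ((a - 1) gchoose k) \<le> 1"
    unfolding eq by (auto intro: prod_nonneg prod_le_1)
qed

lemma abs_gbinomial_Suc:
  fixes a :: real assumes "0 \<le> a" "a \<le> 1"
  shows "\<bar>a gchoose Suc k\<bar> = (-1) ^ k * (a gchoose Suc k)"
    and "(-1) ^ k * (a gchoose Suc k) = a / real (Suc k) * ((-1) ^ k * ((a - 1) gchoose k))"
proof -
  show eq: "(-1) ^ k * (a gchoose Suc k) = a / real (Suc k) * ((-1) ^ k * ((a - 1) gchoose k))"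
    using gbinomial_absorption'[of "Suc k" a] by simp
  have "0 \<le> (-1) ^ k * (a gchoose Suc k)"
    unfolding eq using gbinomial_pred_alternating_bounds(1)[OF assms, of k] assms by simp
  moreover have "\<bar>a gchoose Suc k\<bar> = \<bar>(-1) ^ k * (a gchoose Suc k)\<bar>"
    by (simp add: abs_mult power_abs)
  ultimately show "\<bar>a gchoose Suc k\<bar> = (-1) ^ k * (a gchoose Suc k)"
    by simp
qed

lemma abs_gbinomial_Suc_le:
  fixes a :: real assumes "0 \<le> a" "a \<le> 1"
  shows "\<bar>a gchoose Suc k\<bar> \<le> 1 / real (Suc k)"
proof -
  have "\<bar>a gchoose Suc k\<bar> = a / real (Suc k) * ((-1) ^ k * ((a - 1) gchoose k))"
    using abs_gbinomial_Suc[OF assms] by simp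
  also have "\<dots> \<le> 1 / real (Suc k) * 1"
    using gbinomial_pred_alternating_bounds[OF assms, of k] assms
    by (intro mult_mono divide_right_mono) auto
  finally show ?thesis by simp
qed

lemma abs_gbinomial_le:
  fixes a :: real assumes "0 \<le> a" "a \<le> 1"
  shows "\<bar>a gchoose n\<bar> \<le> 2 / (real n + 1)"
proof (cases n)
  case (Suc k)
  have "1 / real (Suc k) \<le> 2 / (real n + 1)"
    using Suc by (simp add: field_simps)
  then show ?thesis using Suc abs_gbinomial_Suc_le[OF assms, of k] by (metis order.trans)
qed simp

lemma sum_atMost_abs_gbinomial:
  fixes a :: real assumes "0 \<le> a" "a \<le> 1"
  shows "(\<Sum>k\<le>m. \<bar>a gchoose k\<bar>) = 2 - (-1) ^ m * ((a - 1) gchoose m)"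
proof -
  have "\<bar>a gchoose k\<bar> = (if k = 0 then 2 else 0) - (a gchoose k) * (-1) ^ k" for k
    using abs_gbinomial_Suc(1)[OF assms] by (cases k) simp_all
  then show ?thesis
    by (simp add: sum_subtractf gbinomial_sum_lower_neg)
qed

lemma sum_abs_gbinomial_le:
  fixes a :: real assumes "0 \<le> a" "a \<le> 1"
  shows "(\<Sum>k<m. \<bar>a gchoose k\<bar>) \<le> 2"
proof (cases m)
  case (Suc j)
  then show ?thesis
    using sum_atMost_abs_gbinomial[OF assms, of j] gbinomial_pred_alternating_bounds(1)[OF assms, of j]
    by (simp add: lessThan_Suc_atMost)
qed simp

lemma summable_abs_gbinomial:
  fixes a :: real assumes "0 \<le> a" "a \<le> 1"
  shows "summable (\<lambda>n. \<bar>a gchoose n\<bar>)" and "(\<Sum>n. \<bar>a gchoose n\<bar>) \<le> 2"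
proof -
  show "summable (\<lambda>n. \<bar>a gchoose n\<bar>)"
    using sum_abs_gbinomial_le[OF assms] by (intro summableI_nonneg_bounded) auto
  then show "(\<Sum>n. \<bar>a gchoose n\<bar>) \<le> 2"
    using sum_abs_gbinomial_le[OF assms] by (intro suminf_le_const) auto
qed

definition binomial_series :: "real \<Rightarrow> complex \<Rightarrow> complex" where
  "binomial_series a z = (\<Sum>n. of_real (a gchoose n) * z ^ n)"

lemma norm_gbinomial_term_le:
  fixes z :: complex
  shows "norm z \<le> 1 \<Longrightarrow> norm (of_real (a gchoose n) * z ^ n) \<le> \<bar>a gchoose n\<bar>"
  by (simp add: norm_mult norm_power mult_left_le power_le_one)

lemma binomial_series_eq_powr:
  "norm z < 1 \<Longrightarrow> binomial_series a z = (1 + z) powr of_real a"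
  using sums_unique[OF gen_binomial_complex, of z "of_real a"]
  by (simp add: binomial_series_def gbinomial_prod_rev of_real_prod)

lemma norm_binomial_series_le:
  assumes "0 \<le> a" "a \<le> 1" "norm z \<le> 1"
  shows "norm (binomial_series a z) \<le> 2"
proof -
  have "summable (\<lambda>n. norm (of_real (a gchoose n) * z ^ n))"
    by (rule summable_comparison_test'[OF summable_abs_gbinomial(1)[OF assms(1,2)]])
       (use norm_gbinomial_term_le[OF assms(3)] in simp)
  then have "norm (binomial_series a z) \<le> (\<Sum>n. norm (of_real (a gchoose n) * z ^ n))"
    unfolding binomial_series_def by (rule summable_norm)
  also have "\<dots> \<le> (\<Sum>n. \<bar>a gchoose n\<bar>)"
    using norm_gbinomial_term_le[OF assms(3)] summable_abs_gbinomial(1)[OF assms(1,2)] \<open>summable _\<close>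
    by (intro suminf_le) auto
  also have "\<dots> \<le> 2" by (rule summable_abs_gbinomial(2)[OF assms(1,2)])
  finally show ?thesis .
qed

lemma uniform_limit_binomial_partial_sums:
  assumes "0 \<le> a" "a \<le> 1" "\<And>t. t \<in> S \<Longrightarrow> norm (w t) \<le> 1"
  shows "uniform_limit S (\<lambda>m t. \<Sum>n<m. of_real (a gchoose n) * w t ^ n)
           (\<lambda>t. binomial_series a (w t)) sequentially"
  unfolding binomial_series_def
  using assms norm_gbinomial_term_le summable_abs_gbinomial(1)
  by (intro Weierstrass_m_test[where M = "\<lambda>n. \<bar>a gchoose n\<bar>"]) auto

lemma tendsto_binomial_series_radial:
  assumes "0 \<le> a" "a \<le> 1" "norm w \<le> 1"
  shows "((\<lambda>R. binomial_series a (of_real R * w)) \<longlongrightarrow> binomial_series a w) (at_left 1)"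
proof -
  have near_1: "eventually (\<lambda>R::real. R \<in> {0<..<1}) (at_left 1)"
    by (rule eventually_at_left_real) simp
  have bound: "norm (of_real (a gchoose n) * (of_real R * w) ^ n) \<le> \<bar>a gchoose n\<bar>"
    if "R \<in> {0<..<1}" for n R
    using that assms(3) by (intro norm_gbinomial_term_le) (simp add: norm_mult mult_le_one)
  have "\<forall>\<^sub>F (n, R) in at_top \<times>\<^sub>F at_left 1.
               norm (of_real (a gchoose n) * (of_real R * w) ^ n) \<le> \<bar>a gchoose n\<bar>"
    unfolding eventually_prod_filter
    by (rule exI[of _ "\<lambda>_. True"], rule exI[of _ "\<lambda>R. R \<in> {0<..<1}"]) (use near_1 bound in auto)
  then have "((\<lambda>R. \<Sum>n. of_real (a gchoose n) * (of_real R * w) ^ n) \<longlongrightarrow>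
          (\<Sum>n. of_real (a gchoose n) * (of_real 1 * w) ^ n)) (at_left 1)"
    by (intro tannerys_theorem[THEN conjunct2, THEN conjunct2] tendsto_intros)
       (use summable_abs_gbinomial(1)[OF assms(1,2)] in auto)
  then show ?thesis by (simp add: binomial_series_def)
qed

lemma tendsto_phiR:
  assumes "0 \<le> a" "a \<le> 1"
  shows "((\<lambda>R. phiR a R t) \<longlongrightarrow>
           binomial_series a (- exp (\<i> * t)) * binomial_series a (exp (- \<i> * t))) (at_left 1)"
proof -
  have "eventually (\<lambda>R::real. R \<in> {0<..<1}) (at_left 1)"
    by (rule eventually_at_left_real) simp
  then have "\<forall>\<^sub>F R in at_left 1. binomial_series a (of_real R * - exp (\<i> * t)) *
      binomial_series a (of_real R * exp (- \<i> * t)) = phiR a R t"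
    by eventually_elim
       (simp add: binomial_series_eq_powr norm_mult phiR_def algebra_simps)
  moreover have "((\<lambda>R. binomial_series a (of_real R * - exp (\<i> * t)) *
      binomial_series a (of_real R * exp (- \<i> * t))) \<longlongrightarrow>
      binomial_series a (- exp (\<i> * t)) * binomial_series a (exp (- \<i> * t))) (at_left 1)"
    using assms by (intro tendsto_mult tendsto_binomial_series_radial) simp_all
  ultimately show ?thesis by (rule Lim_transform_eventually[rotated])
qed

lemma phi_eq_binomial_series:
  assumes "0 \<le> a" "a \<le> 1"
  shows "phi a t = binomial_series a (- exp (\<i> * t)) * binomial_series a (exp (- \<i> * t))"
  unfolding phi_def by (rule tendsto_Lim[OF _ tendsto_phiR[OF assms]]) simp

lemma phi_add_1:
  assumes "0 \<le> a" "a \<le> 1"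
  shows "phi (a + 1) t = phi a t * (exp (- \<i> * t) - exp (\<i> * t))"
proof -
  have "phiR (a + 1) R t = phiR a R t * ((1 - of_real R * exp (\<i> * t)) * (1 + of_real R * exp (- \<i> * t)))"
    for R
    by (simp add: phiR_def powr_add algebra_simps)
  moreover have "(1 - of_real 1 * exp (\<i> * t)) * (1 + of_real 1 * exp (- \<i> * t)) =
      exp (- \<i> * t) - exp (\<i> * t)"
    by (simp add: algebra_simps flip: exp_add)
  ultimately have "((\<lambda>R. phiR (a + 1) R t) \<longlongrightarrow> phi a t * (exp (- \<i> * t) - exp (\<i> * t))) (at_left 1)"
    using tendsto_phiR[OF assms, of t] unfolding phi_eq_binomial_series[OF assms]
    by (auto intro!: tendsto_eq_intros)
  then show ?thesis
    unfolding phi_def by (rule tendsto_Lim[rotated]) simp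
qed

lemma has_integral_exp_int:
  "((\<lambda>t. exp (\<i> * of_int m * of_real t)) has_integral (if m = 0 then 2 * of_real pi else 0))
     {-pi..pi}"
proof (cases "m = 0")
  case True
  then show ?thesis
    using has_integral_const_real[of "1::complex" "-pi" pi] by (simp add: scaleR_conv_of_real)
next
  case False
  define A where "A = \<i> * of_int m"
  have "A \<noteq> 0" using False by (simp add: A_def)
  have "exp (pi *\<^sub>R A) = exp (- (pi *\<^sub>R A)) * exp ((2 * of_int m * of_real pi) * \<i>)"
    by (subst exp_add[symmetric]) (simp add: A_def scaleR_conv_of_real algebra_simps)
  then have periodic: "exp (pi *\<^sub>R A) = exp ((-pi) *\<^sub>R A)"
    using exp_integer_2pi[of "of_int m"] by simp
  have "((\<lambda>t. A * exp (t *\<^sub>R A)) has_integral (exp (pi *\<^sub>R A) - exp ((-pi) *\<^sub>R A))) {-pi..pi}"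
    by (rule fundamental_theorem_of_calculus)
       (auto intro!: has_vector_derivative_at_within exp_scaleR_has_vector_derivative_left)
  then have "((\<lambda>t. A * exp (t *\<^sub>R A)) has_integral 0) {-pi..pi}"
    by (simp add: periodic)
  then have "((\<lambda>t. (1 / A) * (A * exp (t *\<^sub>R A))) has_integral (1 / A) * 0) {-pi..pi}"
    by (rule has_integral_mult_right)
  moreover have "(\<lambda>t. (1 / A) * (A * exp (t *\<^sub>R A))) = (\<lambda>t. exp (\<i> * of_int m * of_real t))"
    using \<open>A \<noteq> 0\<close> by (auto simp: A_def scaleR_conv_of_real algebra_simps)
  ultimately show ?thesis
    using False by simp
qed

lemma fourier_coeff_exp_sum:
  assumes "finite A"
  shows "fourier_coeff (\<lambda>t. \<Sum>p\<in>A. c p * exp (\<i> * of_int (m p) * of_real t)) s =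
         (\<Sum>p\<in>{p\<in>A. m p = s}. c p)"
proof -
  have "exp (\<i> * of_int j * of_real t) * exp (- \<i> * of_int s * of_real t) = exp (\<i> * of_int (j - s) * of_real t)"
    for j t
    by (simp add: algebra_simps flip: exp_add)
  then have integrand: "(\<Sum>p\<in>A. c p * exp (\<i> * of_int (m p) * of_real t)) * exp (- \<i> * of_int s * of_real t) =
      (\<Sum>p\<in>A. c p * exp (\<i> * of_int (m p - s) * of_real t))" for t
    by (simp add: sum_distrib_right mult.assoc)
  have "((\<lambda>t. \<Sum>p\<in>A. c p * exp (\<i> * of_int (m p - s) * of_real t)) has_integral
          (\<Sum>p\<in>A. c p * (if m p - s = 0 then 2 * of_real pi else 0))) {-pi..pi}"
    by (intro has_integral_sum assms has_integral_mult_right has_integral_exp_int)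
  also have "(\<Sum>p\<in>A. c p * (if m p - s = 0 then 2 * of_real pi else 0)) =
      (\<Sum>p\<in>A. 2 * of_real pi * (if m p = s then c p else 0))"
    by (intro sum.cong) auto
  also have "\<dots> = 2 * of_real pi * (\<Sum>p\<in>{p\<in>A. m p = s}. c p)"
    using assms by (simp add: sum.inter_filter sum_distrib_left)
  finally have I: "((\<lambda>t. \<Sum>p\<in>A. c p * exp (\<i> * of_int (m p - s) * of_real t)) has_integral
          2 * of_real pi * (\<Sum>p\<in>{p\<in>A. m p = s}. c p)) {-pi..pi}" .
  show ?thesis
    unfolding fourier_coeff_def integrand integral_unique[OF I] by simp
qed

lemma tendsto_fourier_coeff_uniform_limit:
  assumes "uniform_limit {-pi..pi} g h sequentially" "\<And>n. continuous_on {-pi..pi} (g n)"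
  shows "(\<lambda>n. fourier_coeff (g n) s) \<longlonglongrightarrow> fourier_coeff h s"
proof -
  have "uniform_limit {-pi..pi} (\<lambda>n t. g n t * exp (- \<i> * of_int s * of_real t))
          (\<lambda>t. h t * exp (- \<i> * of_int s * of_real t)) sequentially"
  proof (rule uniform_lim_mult[OF assms(1) uniform_limit_const])
    have "continuous_on {-pi..pi} h"
      using assms by (intro uniform_limit_theorem) auto
    then show "bounded (h ` {-pi..pi})"
      by (intro compact_imp_bounded compact_continuous_image) auto
    show "bounded ((\<lambda>t. exp (- \<i> * of_int s * of_real t)) ` {-pi..pi})"
      by (rule boundedI[of _ 1]) (auto simp: norm_exp_eq_Re)
  qed
  then obtain I J where
      I: "\<And>n. ((\<lambda>t. g n t * exp (- \<i> * of_int s * of_real t)) has_integral I n) {-pi..pi}" and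
      J: "((\<lambda>t. h t * exp (- \<i> * of_int s * of_real t)) has_integral J) {-pi..pi}" and
      IJ: "I \<longlonglongrightarrow> J"
    by (rule uniform_limit_integral) (auto intro!: continuous_intros assms(2))
  from IJ have "(\<lambda>n. of_real (1 / (2 * pi)) * I n) \<longlonglongrightarrow> of_real (1 / (2 * pi)) * J"
    by (rule tendsto_mult_left)
  then show ?thesis
    unfolding fourier_coeff_def integral_unique[OF I] integral_unique[OF J] .
qed

lemma fourier_coeff_mult_exp_diff:
  assumes "continuous_on {-pi..pi} h"
  shows "fourier_coeff (\<lambda>t. h t * (exp (- \<i> * t) - exp (\<i> * t))) s =
         fourier_coeff h (s + 1) - fourier_coeff h (s - 1)"
proof -
  have "exp (- \<i> * t) * exp (- \<i> * of_int s * of_real t) = exp (- \<i> * of_int (s + 1) * of_real t)"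
    and "exp (\<i> * t) * exp (- \<i> * of_int s * of_real t) = exp (- \<i> * of_int (s - 1) * of_real t)"
    for t :: real
    by (simp_all add: algebra_simps flip: exp_add)
  then have integrand: "h t * (exp (- \<i> * t) - exp (\<i> * t)) * exp (- \<i> * of_int s * of_real t) =
      h t * exp (- \<i> * of_int (s + 1) * of_real t) - h t * exp (- \<i> * of_int (s - 1) * of_real t)"
    for t
    by (simp add: algebra_simps)
  have int: "(\<lambda>t. h t * exp (- \<i> * of_int m * of_real t)) integrable_on {-pi..pi}" for m
    by (intro integrable_continuous_interval continuous_intros assms)
  show ?thesis
    unfolding fourier_coeff_def integrand integral_diff[OF int int] by (rule right_diff_distrib)
qed

lemma mult_le_distance_bound:
  fixes b :: "nat \<Rightarrow> real"
  assumes nonneg: "\<And>n. 0 \<le> b n" and decay: "\<And>n. b n \<le> 2 / (real n + 1)"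
  shows "b j * b k \<le> 2 / (real_of_int \<bar>int j - int k\<bar> + 1) * (b j + b k)"
proof -
  define c where "c = 2 / (real_of_int \<bar>int j - int k\<bar> + 1)"
  have "b (max j k) \<le> 2 / (real (max j k) + 1)" by (rule decay)
  also have "\<dots> \<le> c"
    unfolding c_def by (intro divide_left_mono) auto
  finally have "b j \<le> c \<or> b k \<le> c" by (auto simp: max_def split: if_splits)
  moreover have "0 \<le> c * b j" "0 \<le> c * b k"
    using nonneg by (auto simp: c_def)
  ultimately have "b j * b k \<le> c * b j + c * b k"
  proof (elim disjE)
    assume "b j \<le> c"
    then have "b j * b k \<le> c * b k" using nonneg by (rule mult_right_mono)
    then show ?thesis using \<open>0 \<le> c * b j\<close> by linarith
  next
    assume "b k \<le> c"
    then have "b k * b j \<le> c * b j" using nonneg by (rule mult_right_mono)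
    then have "b j * b k \<le> c * b j" by (simp add: mult.commute)
    then show ?thesis using \<open>0 \<le> c * b k\<close> by linarith
  qed
  then show ?thesis by (simp add: c_def distrib_left)
qed

lemma diagonal_sum_le:
  fixes b :: "nat \<Rightarrow> real"
  assumes nonneg: "\<And>n. 0 \<le> b n" and decay: "\<And>n. b n \<le> 2 / (real n + 1)"
    and total: "(\<Sum>n<m. b n) \<le> B"
  shows "(\<Sum>p\<in>{p\<in>{..<m}\<times>{..<m}. int (fst p) - int (snd p) = s}. b (fst p) * b (snd p))
           \<le> 4 * B / (real_of_int \<bar>s\<bar> + 1)"
proof -
  define D where "D = {p\<in>{..<m}\<times>{..<m}. int (fst p) - int (snd p) = s}"
  define c where "c = 2 / (real_of_int \<bar>s\<bar> + 1)"
  have "inj_on fst D" "inj_on snd D" "fst ` D \<subseteq> {..<m}" "snd ` D \<subseteq> {..<m}"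
    by (auto simp: inj_on_def D_def)
  then have marginals: "(\<Sum>p\<in>D. b (fst p)) \<le> B" "(\<Sum>p\<in>D. b (snd p)) \<le> B"
    using sum.reindex[of fst D b] sum.reindex[of snd D b]
      sum_mono2[of "{..<m}" "fst ` D" b] sum_mono2[of "{..<m}" "snd ` D" b] nonneg total
    by (simp_all add: comp_def)
  have "(\<Sum>p\<in>D. b (fst p) * b (snd p)) \<le> (\<Sum>p\<in>D. c * (b (fst p) + b (snd p)))"
    using mult_le_distance_bound[OF nonneg decay] by (intro sum_mono) (auto simp: D_def c_def)
  also have "\<dots> = c * ((\<Sum>p\<in>D. b (fst p)) + (\<Sum>p\<in>D. b (snd p)))"
    by (simp only: sum.distrib[symmetric] sum_distrib_left)
  also have "\<dots> \<le> c * (B + B)"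
    using marginals by (intro mult_left_mono add_mono) (auto simp: c_def)
  also have "\<dots> = 4 * B / (real_of_int \<bar>s\<bar> + 1)"
    by (simp add: c_def)
  finally show ?thesis unfolding D_def .
qed

definition phi_partial :: "real \<Rightarrow> nat \<Rightarrow> real \<Rightarrow> complex" where
  "phi_partial a m t = (\<Sum>j<m. of_real (a gchoose j) * (- exp (\<i> * t)) ^ j) *
                       (\<Sum>k<m. of_real (a gchoose k) * exp (- \<i> * t) ^ k)"

lemma uniform_limit_phi_partial:
  assumes "0 \<le> a" "a \<le> 1"
  shows "uniform_limit S (phi_partial a) (phi a) sequentially"
proof -
  have "uniform_limit S (phi_partial a)
          (\<lambda>t. binomial_series a (- exp (\<i> * t)) * binomial_series a (exp (- \<i> * t))) sequentially"
    unfolding phi_partial_def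
  proof (intro uniform_lim_mult uniform_limit_binomial_partial_sums assms)
    show "bounded ((\<lambda>t. binomial_series a (- exp (\<i> * t))) ` S)"
      "bounded ((\<lambda>t. binomial_series a (exp (- \<i> * t))) ` S)"
      using assms by (auto intro!: boundedI[of _ 2] norm_binomial_series_le simp: norm_exp_eq_Re)
  qed (simp_all add: norm_exp_eq_Re)
  moreover have "phi a = (\<lambda>t. binomial_series a (- exp (\<i> * t)) * binomial_series a (exp (- \<i> * t)))"
    using phi_eq_binomial_series[OF assms] by (rule ext)
  ultimately show ?thesis by simp
qed

lemma continuous_on_phi:
  assumes "0 \<le> a" "a \<le> 1"
  shows "continuous_on S (phi a)"
  by (rule uniform_limit_theorem[OF _ uniform_limit_phi_partial[OF assms]])
     (auto simp: phi_partial_def intro!: always_eventually continuous_intros)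

lemma phi_partial_eq_exp_sum:
  "phi_partial a m t = (\<Sum>p\<in>{..<m}\<times>{..<m}.
     of_real ((-1) ^ fst p * (a gchoose fst p) * (a gchoose snd p)) *
     exp (\<i> * of_int (int (fst p) - int (snd p)) * of_real t))"
proof -
  have "(- exp (\<i> * t)) ^ j * exp (- \<i> * t) ^ k =
        (-1) ^ j * exp (\<i> * of_int (int j - int k) * of_real t)" for j k
    by (simp add: power_minus' algebra_simps flip: exp_of_nat_mult exp_add)
  then show ?thesis
    unfolding phi_partial_def sum_product sum.cartesian_product
    by (intro sum.cong) (auto simp: algebra_simps)
qed

lemma norm_fourier_coeff_phi_le:
  assumes "0 \<le> a" "a \<le> 1"
  shows "norm (fourier_coeff (phi a) s) \<le> 8 / (real_of_int \<bar>s\<bar> + 1)"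
proof (rule Lim_norm_ubound)
  show "(\<lambda>m. fourier_coeff (phi_partial a m) s) \<longlonglongrightarrow> fourier_coeff (phi a) s"
    by (intro tendsto_fourier_coeff_uniform_limit uniform_limit_phi_partial assms)
       (auto simp: phi_partial_def intro!: continuous_intros)
  show "\<forall>\<^sub>F m in sequentially. norm (fourier_coeff (phi_partial a m) s) \<le> 8 / (real_of_int \<bar>s\<bar> + 1)"
  proof (intro always_eventually allI)
    fix m
    define D where "D = {p\<in>{..<m}\<times>{..<m}. int (fst p) - int (snd p) = s}"
    have "norm (fourier_coeff (phi_partial a m) s) =
          norm (\<Sum>p\<in>D. of_real ((-1) ^ fst p * (a gchoose fst p) * (a gchoose snd p)) :: complex)"
      unfolding phi_partial_eq_exp_sum D_def by (subst fourier_coeff_exp_sum) auto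
    also have "\<dots> \<le> (\<Sum>p\<in>D. \<bar>a gchoose fst p\<bar> * \<bar>a gchoose snd p\<bar>)"
      by (rule order.trans[OF norm_sum]) (simp add: norm_mult norm_power)
    also have "\<dots> \<le> 4 * 2 / (real_of_int \<bar>s\<bar> + 1)"
      unfolding D_def
      using abs_gbinomial_le[OF assms] sum_abs_gbinomial_le[OF assms]
      by (intro diagonal_sum_le) auto
    finally show "norm (fourier_coeff (phi_partial a m) s) \<le> 8 / (real_of_int \<bar>s\<bar> + 1)"
      by simp
  qed
qed simp

lemma fourier_coeff_phi_add_1:
  assumes "0 \<le> a" "a \<le> 1"
  shows "fourier_coeff (phi (a + 1)) s = fourier_coeff (phi a) (s + 1) - fourier_coeff (phi a) (s - 1)"
  unfolding phi_add_1[OF assms, abs_def]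
  by (intro fourier_coeff_mult_exp_diff continuous_on_phi assms)

lemma sum_by_parts_centered:
  fixes h X :: "int \<Rightarrow> 'a::comm_ring"
  assumes support: "\<And>j. j \<le> 0 \<or> n \<le> j \<Longrightarrow> X j = 0"
  shows "(\<Sum>l=0..n. (h (l - 1) - h (l + 1)) * X l) = (\<Sum>m=0..n. h m * (X (m + 1) - X (m - 1)))"
proof -
  have forward: "(\<Sum>l=0..n. h (l - 1) * X l) = (\<Sum>m=0..n. h m * X (m + 1))"
  proof -
    have "(\<Sum>l=0..n. h (l - 1) * X l) = (\<Sum>l=0..n + 1. h (l - 1) * X l)"
      by (rule sum.mono_neutral_left) (auto simp: support)
    also have "\<dots> = (\<Sum>m=-1..n. h m * X (m + 1))"
      by (rule sum.reindex_bij_witness[of _ "\<lambda>m. m + 1" "\<lambda>l. l - 1"]) auto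
    also have "\<dots> = (\<Sum>m=0..n. h m * X (m + 1))"
      by (rule sum.mono_neutral_right) (auto simp: support)
    finally show ?thesis .
  qed
  have backward: "(\<Sum>l=0..n. h (l + 1) * X l) = (\<Sum>m=0..n. h m * X (m - 1))"
  proof -
    have "(\<Sum>l=0..n. h (l + 1) * X l) = (\<Sum>l=-1..n. h (l + 1) * X l)"
      by (rule sum.mono_neutral_left) (auto simp: support)
    also have "\<dots> = (\<Sum>m=0..n + 1. h m * X (m - 1))"
      by (rule sum.reindex_bij_witness[of _ "\<lambda>m. m - 1" "\<lambda>l. l + 1"]) auto
    also have "\<dots> = (\<Sum>m=0..n. h m * X (m - 1))"
      by (rule sum.mono_neutral_right) (auto simp: support)
    finally show ?thesis .
  qed
  show ?thesis
    by (simp add: left_diff_distrib right_diff_distrib sum_subtractf forward backward)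
qed

lemma sum_atLeastAtMost_of_nat:
  "(\<Sum>l=0..N. F (int l)) = (\<Sum>j=0..int N. F j)"
proof -
  have "(\<Sum>l=0..N. F (int l)) = sum F (int ` {0..N})"
    by (subst sum.reindex) (simp_all add: comp_def)
  also have "int ` {0..N} = {0..int N}"
    by (simp add: image_int_atLeastAtMost)
  finally show ?thesis .
qed

lemma taylor_lipschitz_derivative:
  fixes f f' :: "real \<Rightarrow> real"
  assumes der: "\<And>x. x \<in> {a..b} \<Longrightarrow> (f has_real_derivative f' x) (at x within {a..b})"
    and lip: "L-lipschitz_on {a..b} f'"
    and x: "x \<in> {a..b}" and y: "y \<in> {a..b}"
  shows "\<bar>f y - f x - f' x * (y - x)\<bar> \<le> L * (y - x)\<^sup>2"
proof -
  have deriv: "(f has_derivative (*) (f' z)) (at z within {min x y..max x y})"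
    if "min x y \<le> z" "z \<le> max x y" for z
  proof (rule has_derivative_subset)
    show "(f has_derivative (*) (f' z)) (at z within {a..b})"
      using that x y by (intro has_field_derivative_imp_has_derivative der) (auto simp: min_le_iff_disj le_max_iff_disj)
    show "{min x y..max x y} \<subseteq> {a..b}" using x y by auto
  qed
  have "\<exists>z\<in>{min x y..max x y}. f (max x y) - f (min x y) = f' z * (max x y - min x y)"
    using mvt_very_simple[of "min x y" "max x y" f "\<lambda>z. (*) (f' z)", OF _ deriv] by simp
  then obtain z where z: "z \<in> {min x y..max x y}"
      "f (max x y) - f (min x y) = f' z * (max x y - min x y)" ..
  then have mvt: "f y - f x = f' z * (y - x)"
    by (cases "x \<le> y") (auto simp: algebra_simps)
  have "z \<in> {a..b}" "\<bar>z - x\<bar> \<le> \<bar>y - x\<bar>"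
    using z(1) x y by auto
  have "\<bar>f y - f x - f' x * (y - x)\<bar> = \<bar>f' z - f' x\<bar> * \<bar>y - x\<bar>"
    by (simp add: mvt abs_mult flip: left_diff_distrib)
  also have "\<dots> \<le> (L * \<bar>z - x\<bar>) * \<bar>y - x\<bar>"
    using lipschitz_onD[OF lip \<open>z \<in> {a..b}\<close> x] by (intro mult_right_mono) (auto simp: dist_real_def)
  also have "\<dots> \<le> (L * \<bar>y - x\<bar>) * \<bar>y - x\<bar>"
    using \<open>\<bar>z - x\<bar> \<le> \<bar>y - x\<bar>\<close> lipschitz_on_nonneg[OF lip] by (intro mult_right_mono mult_left_mono) auto
  finally show ?thesis by (simp add: power2_eq_square)
qed

definition grid_sample :: "(real \<Rightarrow> real) \<Rightarrow> nat \<Rightarrow> int \<Rightarrow> real" where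
  "grid_sample f N j = (if 0 \<le> j \<and> j \<le> int N then f (of_int j / real N) else 0)"

lemma grid_sample_difference_le:
  fixes f f' :: "real \<Rightarrow> real"
  assumes der: "\<And>x. x \<in> {0..1} \<Longrightarrow> (f has_real_derivative f' x) (at x within {0..1})"
    and lip: "L-lipschitz_on {0..1} f'" and N: "0 < N"
    and m: "0 \<le> m" "m \<le> int N" and md: "0 \<le> m + d" "m + d \<le> int N" and d: "\<bar>d\<bar> = 1"
  shows "\<bar>real N * (grid_sample f N (m + d) - grid_sample f N m) - of_int d * f' (of_int m / real N)\<bar>
           \<le> L / real N"
proof -
  define x y where "x = of_int m / real N" and "y = of_int (m + d) / real N"
  have xy: "x \<in> {0..1}" "y \<in> {0..1}" "y - x = of_int d / real N"
    using N m md by (auto simp: x_def y_def field_simps)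
  have "d = 1 \<or> d = -1" using d by arith
  then have "(y - x)\<^sup>2 = 1 / (real N)\<^sup>2"
    by (auto simp: xy(3) power_divide)
  then have taylor: "\<bar>f y - f x - f' x * (y - x)\<bar> \<le> L / (real N)\<^sup>2"
    using taylor_lipschitz_derivative[OF der lip xy(1,2)] by simp
  have "grid_sample f N (m + d) = f y" "grid_sample f N m = f x"
    using m md by (simp_all add: grid_sample_def x_def y_def)
  moreover have "real N * (y - x) = of_int d"
    using N by (simp add: xy(3))
  moreover have "real N * (f y - f x - f' x * (y - x)) = real N * (f y - f x) - f' x * (real N * (y - x))"
    by (simp add: algebra_simps)
  ultimately have "real N * (grid_sample f N (m + d) - grid_sample f N m) - of_int d * f' x =
        real N * (f y - f x - f' x * (y - x))"
    by (simp add: mult.commute)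
  also have "\<bar>\<dots>\<bar> \<le> real N * (L / (real N)\<^sup>2)"
    unfolding abs_mult abs_of_nat using taylor by (rule mult_left_mono) simp
  also have "\<dots> = L / real N"
    by (simp add: power2_eq_square)
  finally show ?thesis by (simp add: x_def)
qed

lemma central_difference_error_le:
  fixes f f' :: "real \<Rightarrow> real"
  assumes der: "\<And>x. x \<in> {0..1} \<Longrightarrow> (f has_real_derivative f' x) (at x within {0..1})"
    and lip: "L-lipschitz_on {0..1} f'" and f0: "f 0 = 0" and f1: "f 1 = 0"
    and N: "0 < N" and m: "0 \<le> m" "m \<le> int N"
  shows "\<bar>real N * (grid_sample f N (m + 1) - grid_sample f N (m - 1)) - 2 * f' (of_int m / real N)\<bar>
           \<le> 2 * L / real N + (if 0 < m \<and> m < int N then 0 else \<bar>f' (of_int m / real N)\<bar>)"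
proof -
  define F where "F d = real N * (grid_sample f N (m + d) - grid_sample f N m) - of_int d * f' (of_int m / real N)"
    for d
  have "0 \<le> L" using lip by (rule lipschitz_on_nonneg)
  have step: "\<bar>F d\<bar> \<le> L / real N" if "0 \<le> m + d" "m + d \<le> int N" "\<bar>d\<bar> = 1" for d
    unfolding F_def using grid_sample_difference_le[OF der lip N m that] .
  have boundary: "grid_sample f N m = 0" if "m = 0 \<or> m = int N"
    using that N f0 f1 by (auto simp: grid_sample_def)
  have "\<bar>F 1\<bar> \<le> L / real N + (if m < int N then 0 else \<bar>f' (of_int m / real N)\<bar>)"
    using step[of 1] m boundary \<open>0 \<le> L\<close> by (auto simp: F_def grid_sample_def)
  moreover have "\<bar>F (-1)\<bar> \<le> L / real N + (if 0 < m then 0 else \<bar>f' (of_int m / real N)\<bar>)"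
    using step[of "-1"] m boundary \<open>0 \<le> L\<close> by (auto simp: F_def grid_sample_def)
  moreover have "real N * (grid_sample f N (m + 1) - grid_sample f N (m - 1)) - 2 * f' (of_int m / real N) =
      F 1 - F (-1)"
    by (simp add: F_def algebra_simps)
  ultimately show ?thesis
    using N \<open>0 \<le> L\<close> by (auto split: if_splits)
qed

lemma frac_seq_add_1_diff:
  fixes f f' :: "real \<Rightarrow> real"
  assumes a: "0 \<le> a" "a \<le> 1" and f0: "f 0 = 0" and f1: "f 1 = 0" and N: "0 < N"
  shows "frac_seq (a + 1) f x N - 2 * frac_seq a f' x N =
         of_real (real N powr a) * (\<Sum>m=0..int N. fourier_coeff (phi a) (int (nat \<lfloor>real N * x\<rfloor>) - m) *
           of_real (real N * (grid_sample f N (m + 1) - grid_sample f N (m - 1)) -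
                    2 * f' (of_int m / real N)))"
proof -
  define k where "k = int (nat \<lfloor>real N * x\<rfloor>)"
  define h where "h j = fourier_coeff (phi a) (k - j)" for j
  define X where "X j = complex_of_real (grid_sample f N j)" for j
  have X_support: "X j = 0" if "j \<le> 0 \<or> int N \<le> j" for j
    using that N f0 f1 by (auto simp: X_def grid_sample_def)
  have entry: "toeplitz_entry (phi (a + 1)) (nat \<lfloor>real N * x\<rfloor>) l = h (int l - 1) - h (int l + 1)" for l
    unfolding toeplitz_entry_def fourier_coeff_phi_add_1[OF a] h_def k_def by (simp add: algebra_simps)
  have sample: "complex_of_real (f (real l / real N)) = X (int l)" if "l \<le> N" for l
    using that by (simp add: X_def grid_sample_def)
  have "(\<Sum>l=0..N. toeplitz_entry (phi (a + 1)) (nat \<lfloor>real N * x\<rfloor>) l * of_real (f (real l / real N))) =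
        (\<Sum>j=0..int N. (h (j - 1) - h (j + 1)) * X j)"
    unfolding sum_atLeastAtMost_of_nat[symmetric] by (intro sum.cong refl) (simp add: entry sample)
  also have "\<dots> = (\<Sum>m=0..int N. h m * (X (m + 1) - X (m - 1)))"
    using X_support by (rule sum_by_parts_centered)
  finally have "frac_seq (a + 1) f x N =
      of_real (real N powr a) * of_real (real N) * (\<Sum>m=0..int N. h m * (X (m + 1) - X (m - 1)))"
    using N by (simp add: frac_seq_def powr_add)
  moreover have "frac_seq a f' x N = of_real (real N powr a) * (\<Sum>m=0..int N. h m * of_real (f' (of_int m / real N)))"
    unfolding frac_seq_def sum_atLeastAtMost_of_nat[symmetric] by (simp add: toeplitz_entry_def h_def k_def)
  ultimately show ?thesis
    unfolding k_def[symmetric] by (simp add: X_def h_def sum_distrib_left sum_subtractf[symmetric] algebra_simps)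
qed

lemma harm_Suc_le_ln:
  assumes "1 \<le> n"
  shows "harm (Suc n) \<le> 2 + ln (real n)"
proof -
  have "harm (Suc n) - ln (real (Suc n)) \<le> harm 1 - ln (real (1::nat))"
    by (rule euler_mascheroni_sequence_decreasing) auto
  then have "harm (Suc n) \<le> 1 + ln (real (Suc n))"
    by (simp add: harm_expand)
  also have "ln (real (Suc n)) \<le> ln (2 * real n)"
    using assms by (subst ln_le_cancel_iff) auto
  also have "\<dots> = ln 2 + ln (real n)"
    using assms by (simp add: ln_mult)
  also have "ln (2::real) \<le> 1"
    using ln_2_less_1 by simp
  finally show ?thesis by simp
qed

lemma sum_inverse_distance_le:
  fixes k n :: int assumes "0 \<le> k" "k \<le> n"
  shows "(\<Sum>m=0..n. 1 / (real_of_int \<bar>k - m\<bar> + 1)) \<le> 2 * harm (Suc (nat n))"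
proof -
  define g where "g i = 1 / (real_of_int i + 1)" for i
  have g_nonneg: "0 \<le> g i" if "0 \<le> i" for i
    using that by (simp add: g_def)
  have harm_eq: "(\<Sum>i=0..n. g i) = harm (Suc (nat n))"
  proof -
    have "(\<Sum>i=0..n. g i) = (\<Sum>l=0..nat n. g (int l))"
      using assms by (simp add: sum_atLeastAtMost_of_nat)
    also have "\<dots> = (\<Sum>l<Suc (nat n). inverse (of_nat (Suc l)))"
      by (intro sum.cong) (auto simp: g_def field_simps)
    finally show ?thesis by (simp add: harm_altdef)
  qed
  have "(\<Sum>m=0..k. g (k - m)) = (\<Sum>i=0..k. g i)"
    by (rule sum.reindex_bij_witness[of _ "\<lambda>i. k - i" "\<lambda>m. k - m"]) auto
  also have "\<dots> \<le> (\<Sum>i=0..n. g i)"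
    using assms g_nonneg by (intro sum_mono2) auto
  finally have left: "(\<Sum>m=0..k. g (k - m)) \<le> (\<Sum>i=0..n. g i)" .
  have "(\<Sum>m=k+1..n. g (m - k)) = (\<Sum>i=1..n-k. g i)"
    by (rule sum.reindex_bij_witness[of _ "\<lambda>i. i + k" "\<lambda>m. m - k"]) auto
  also have "\<dots> \<le> (\<Sum>i=0..n. g i)"
    using assms g_nonneg by (intro sum_mono2) auto
  finally have right: "(\<Sum>m=k+1..n. g (m - k)) \<le> (\<Sum>i=0..n. g i)" .
  have "{0..n} = {0..k} \<union> {k+1..n}" "{0..k} \<inter> {k+1..n} = {}"
    using assms by auto
  then have "(\<Sum>m=0..n. 1 / (real_of_int \<bar>k - m\<bar> + 1)) =
      (\<Sum>m=0..k. g (k - m)) + (\<Sum>m=k+1..n. g (m - k))"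
    by (simp add: sum.union_disjoint g_def)
  also have "\<dots> \<le> 2 * harm (Suc (nat n))"
    using left right harm_eq by simp
  finally show ?thesis .
qed

lemma norm_sum_decaying_coeff_le:
  fixes c :: "int \<Rightarrow> complex" and e B :: "int \<Rightarrow> real" and k n :: int and \<epsilon> :: real
  assumes c_decay: "\<And>s. norm (c s) \<le> 8 / (real_of_int \<bar>s\<bar> + 1)"
    and e_bound: "\<And>m. 0 \<le> m \<Longrightarrow> m \<le> n \<Longrightarrow> \<bar>e m\<bar> \<le> \<epsilon> + (if 0 < m \<and> m < n then 0 else B m)"
    and "0 \<le> \<epsilon>" and B_nonneg: "\<And>m. 0 \<le> B m" and k: "0 \<le> k" "k \<le> n" and "0 < n"
  shows "norm (\<Sum>m=0..n. c (k - m) * of_real (e m)) \<le>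
           16 * \<epsilon> * harm (Suc (nat n)) + 8 * B 0 / (real_of_int k + 1) + 8 * B n / (real_of_int (n - k) + 1)"
proof -
  define w where "w m = 8 / (real_of_int \<bar>k - m\<bar> + 1)" for m
  define boundary where "boundary m = (if 0 < m \<and> m < n then 0 else B m)" for m
  have "norm (\<Sum>m=0..n. c (k - m) * of_real (e m)) \<le> (\<Sum>m=0..n. w m * (\<epsilon> + boundary m))"
  proof (rule order.trans[OF norm_sum sum_mono])
    fix m assume "m \<in> {0..n}"
    then show "norm (c (k - m) * of_real (e m)) \<le> w m * (\<epsilon> + boundary m)"
      unfolding norm_mult norm_of_real w_def boundary_def
      by (intro mult_mono c_decay e_bound) (auto intro: add_nonneg_nonneg \<open>0 \<le> \<epsilon>\<close> B_nonneg)
  qed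
  also have "\<dots> = \<epsilon> * (\<Sum>m=0..n. w m) + (\<Sum>m=0..n. w m * boundary m)"
    by (simp add: distrib_left sum.distrib sum_distrib_left mult.commute)
  also have "(\<Sum>m=0..n. w m) = 8 * (\<Sum>m=0..n. 1 / (real_of_int \<bar>k - m\<bar> + 1))"
    by (simp add: w_def sum_distrib_left)
  also have "\<dots> \<le> 16 * harm (Suc (nat n))"
    using sum_inverse_distance_le[OF k] by simp
  also have "(\<Sum>m=0..n. w m * boundary m) = (\<Sum>m\<in>{0, n}. w m * boundary m)"
    using \<open>0 < n\<close> by (intro sum.mono_neutral_right) (auto simp: boundary_def)
  also have "\<dots> = 8 * B 0 / (real_of_int k + 1) + 8 * B n / (real_of_int (n - k) + 1)"
    using \<open>0 < n\<close> k by (simp add: w_def boundary_def)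
  finally show ?thesis
    using \<open>0 \<le> \<epsilon>\<close> by (simp add: mult_left_mono mult.assoc)
qed

lemma floor_index_bounds:
  assumes "0 < x" "x < 1"
  shows "0 \<le> int (nat \<lfloor>real N * x\<rfloor>)" and "int (nat \<lfloor>real N * x\<rfloor>) \<le> int N"
    and "real_of_int (int (nat \<lfloor>real N * x\<rfloor>)) \<le> real N * x"
    and "real N * x < real_of_int (int (nat \<lfloor>real N * x\<rfloor>)) + 1"
proof -
  have "real N * x \<le> real N"
    using assms by (simp add: mult_left_le)
  then have "\<lfloor>real N * x\<rfloor> \<le> int N"
    by (simp add: floor_le_iff)
  then show "int (nat \<lfloor>real N * x\<rfloor>) \<le> int N"
    by simp
qed (use assms in auto)

lemma norm_frac_seq_add_1_diff_le:
  fixes f f' :: "real \<Rightarrow> real"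
  assumes a: "0 \<le> a" "a \<le> 1"
    and der: "\<And>x. x \<in> {0..1} \<Longrightarrow> (f has_real_derivative f' x) (at x within {0..1})"
    and lip: "L-lipschitz_on {0..1} f'" and f0: "f 0 = 0" and f1: "f 1 = 0"
    and x: "0 < x" "x < 1" and N: "1 \<le> N"
  shows "norm (frac_seq (a + 1) f x N - 2 * frac_seq a f' x N) \<le>
         real N powr (a - 1) *
           (64 * L + 8 * \<bar>f' 0\<bar> / x + 8 * \<bar>f' 1\<bar> / (1 - x) + 32 * L * ln (real N))"
proof -
  define k where "k = int (nat \<lfloor>real N * x\<rfloor>)"
  have k: "0 \<le> k" "k \<le> int N" "real_of_int k \<le> real N * x" "real N * x < real_of_int k + 1"
    unfolding k_def using x by (rule floor_index_bounds)+
  have "0 \<le> L" using lip by (rule lipschitz_on_nonneg)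
  define e where
    "e m = real N * (grid_sample f N (m + 1) - grid_sample f N (m - 1)) - 2 * f' (of_int m / real N)" for m
  have "\<bar>e m\<bar> \<le> 2 * L / real N + (if 0 < m \<and> m < int N then 0 else \<bar>f' (of_int m / real N)\<bar>)"
    if "0 \<le> m" "m \<le> int N" for m
    unfolding e_def using N that by (intro central_difference_error_le[OF der lip f0 f1]) auto
  from norm_sum_decaying_coeff_le[OF norm_fourier_coeff_phi_le[OF a] this]
  have "norm (\<Sum>m=0..int N. fourier_coeff (phi a) (k - m) * of_real (e m))
        \<le> 16 * (2 * L / real N) * harm (Suc N) + 8 * \<bar>f' 0\<bar> / (real_of_int k + 1) +
          8 * \<bar>f' 1\<bar> / (real_of_int (int N - k) + 1)"
    using k \<open>0 \<le> L\<close> N by simp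
  also have "\<dots> \<le> 16 * (2 * L / real N) * (2 + ln (real N)) + 8 * \<bar>f' 0\<bar> / (real N * x) +
                  8 * \<bar>f' 1\<bar> / (real N * (1 - x))"
  proof (intro add_mono mult_left_mono divide_left_mono)
    show "harm (Suc N) \<le> 2 + ln (real N)" using N by (rule harm_Suc_le_ln)
    show "real N * (1 - x) \<le> real_of_int (int N - k) + 1" using k by (simp add: algebra_simps)
  qed (use k x N \<open>0 \<le> L\<close> in \<open>auto intro!: mult_pos_pos\<close>)
  also have "\<dots> = real N powr (a - 1) / real N powr a *
      (64 * L + 8 * \<bar>f' 0\<bar> / x + 8 * \<bar>f' 1\<bar> / (1 - x) + 32 * L * ln (real N))"
    using N x by (simp add: powr_diff field_simps)
  finally have sum_le: "real N powr a * norm (\<Sum>m=0..int N. fourier_coeff (phi a) (k - m) * of_real (e m))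
      \<le> real N powr (a - 1) * (64 * L + 8 * \<bar>f' 0\<bar> / x + 8 * \<bar>f' 1\<bar> / (1 - x) + 32 * L * ln (real N))"
    using N by (simp add: field_simps)
  have "frac_seq (a + 1) f x N - 2 * frac_seq a f' x N =
      of_real (real N powr a) * (\<Sum>m=0..int N. fourier_coeff (phi a) (k - m) * of_real (e m))"
    unfolding k_def e_def using N by (intro frac_seq_add_1_diff[OF a f0 f1]) simp
  then show ?thesis
    using sum_le by (simp add: norm_mult)
qed

lemma tendsto_powr_mult_ln_zero:
  fixes a C D :: real assumes "a < 1"
  shows "(\<lambda>N. real N powr (a - 1) * (C + D * ln (real N))) \<longlonglongrightarrow> 0"
proof -
  have "(\<lambda>N. C * real N powr (a - 1) + D * (ln (real N) / real N powr (1 - a))) \<longlonglongrightarrow> C * 0 + D * 0"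
    using assms
    by (intro tendsto_intros tendsto_neg_powr filterlim_real_sequentially lim_ln_over_power) auto
  moreover have "\<forall>\<^sub>F N in sequentially.
      C * real N powr (a - 1) + D * (ln (real N) / real N powr (1 - a)) =
      real N powr (a - 1) * (C + D * ln (real N))"
    using eventually_gt_at_top[of "0::nat"]
  proof eventually_elim
    case (elim N)
    then have "real N powr (a - 1) = 1 / real N powr (1 - a)"
      by (simp add: powr_minus_divide[symmetric] powr_minus)
    then show ?case by (simp add: add_divide_distrib algebra_simps)
  qed
  ultimately show ?thesis
    by (simp add: tendsto_cong)
qed

lemma convergent_iff_if_diff_tendsto_0:
  fixes u v :: "nat \<Rightarrow> 'a::real_normed_field"
  assumes "(\<lambda>n. u n - c * v n) \<longlonglongrightarrow> 0" and "c \<noteq> 0"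
  shows "convergent u \<longleftrightarrow> convergent v" and "convergent u \<Longrightarrow> lim u = c * lim v"
proof -
  have u_lim: "u \<longlonglongrightarrow> c * l" if "v \<longlonglongrightarrow> l" for l
    using tendsto_add[OF assms(1) tendsto_mult_left[OF that, of c]] by simp
  have v_lim: "v \<longlonglongrightarrow> l / c" if "u \<longlonglongrightarrow> l" for l
    using tendsto_divide[OF tendsto_diff[OF that assms(1)] tendsto_const[of c]] assms(2) by simp
  show "convergent u \<longleftrightarrow> convergent v"
    using u_lim v_lim unfolding convergent_def by blast
  show "lim u = c * lim v" if "convergent u"
  proof -
    have "v \<longlonglongrightarrow> lim v"
      using that \<open>convergent u \<longleftrightarrow> convergent v\<close> by (simp add: convergent_LIMSEQ_iff)
    then show ?thesis
      using u_lim by (blast intro: limI)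
  qed
qed

theorem mainTheorem6:
  fixes \<alpha> :: real and f f' :: "real \<Rightarrow> real"
  assumes "0 < \<alpha>" and "\<alpha> < 1"
    and "\<And>x. x \<in> {0..1} \<Longrightarrow> (f has_real_derivative f' x) (at x within {0..1})"
    and "f 0 = 0" and "f 1 = 0"
    and "\<exists>C. C-lipschitz_on {0..1} f'"
  shows "\<forall>x \<in> {0<..<1}.
           (frac_derivable (\<alpha> + 1) f x \<longleftrightarrow> frac_derivable \<alpha> f' x) \<and>
           (frac_derivable (\<alpha> + 1) f x \<longrightarrow>
              frac_deriv (\<alpha> + 1) f x = 2 * frac_deriv \<alpha> f' x)"
proof
  fix x :: real assume x: "x \<in> {0<..<1}"
  obtain L where lip: "L-lipschitz_on {0..1} f'" using assms(6) by blast
  have "(\<lambda>N. frac_seq (\<alpha> + 1) f x N - 2 * frac_seq \<alpha> f' x N) \<longlonglongrightarrow> 0"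
  proof (rule Lim_null_comparison)
    show "\<forall>\<^sub>F N in sequentially. norm (frac_seq (\<alpha> + 1) f x N - 2 * frac_seq \<alpha> f' x N) \<le>
        real N powr (\<alpha> - 1) * ((64 * L + 8 * \<bar>f' 0\<bar> / x + 8 * \<bar>f' 1\<bar> / (1 - x)) + 32 * L * ln (real N))"
      using eventually_ge_at_top[of "1::nat"]
      by eventually_elim
         (use x assms(1,2) in \<open>auto intro: norm_frac_seq_add_1_diff_le[OF _ _ assms(3) lip assms(4,5)]\<close>)
    show "(\<lambda>N. real N powr (\<alpha> - 1) * ((64 * L + 8 * \<bar>f' 0\<bar> / x + 8 * \<bar>f' 1\<bar> / (1 - x)) + 32 * L * ln (real N)))
        \<longlonglongrightarrow> 0"
      using assms(2) by (rule tendsto_powr_mult_ln_zero)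
  qed
  from convergent_iff_if_diff_tendsto_0[OF this]
  show "(frac_derivable (\<alpha> + 1) f x \<longleftrightarrow> frac_derivable \<alpha> f' x) \<and>
        (frac_derivable (\<alpha> + 1) f x \<longrightarrow> frac_deriv (\<alpha> + 1) f x = 2 * frac_deriv \<alpha> f' x)"
    by (simp add: frac_derivable_def frac_deriv_def)
qed

end
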